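(* Let $G \leq \mathrm{Aut}(K_{n,n})$ be a subgroup isomorphic to $D_2 \cong \mathbb{Z}_2 \times \mathbb{Z}_2$. Suppose there is an embedding $\Gamma$ of $K_{n,n}$ in $S^3$ such that $G$ is induced on $\Gamma$ by an isomorphic subgroup $\widehat{G} \leq \mathrm{SO}(4)$. Assume each of the three involutions of $G$ fixes exactly two vertices of $V$ and exactly two vertices of $W$. Then the axes (fixed point sets in $S^3$) of the three corresponding involutions of $\widehat{G}$ all pass through two common points, and these two points are either two vertices of $V$ or two vertices of $W$.
   Context: $K_{n,n}$ is the complete bipartite graph with vertex sets $V$, $W$ of $n$ vertices each; every vertex of $V$ is adjacent to every vertex of $W$, and there are no other edges. $S^3$ is the unit sphere in $\mathbb{R}^4$, on which $\mathrm{SO}(4)$ acts by isometries. "$G$ is induced on $\Gamma$ by an isomorphic subgroup $\widehat{G} \leq \mathrm{SO}(4)$" means every element of $\widehat{G}$ leaves $\Gamma$ setwise invariant, and restricting to $\Gamma$ gives an isomorphism from $\widehat{G}$ onto $G$. An involution is an element of order 2. *)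

theory Defs
  imports "HOL-Analysis.Analysis" "HOL-Algebra.Elementary_Groups"
begin

type_synonym vert = "bool \<times> nat"

definition Vside :: "nat \<Rightarrow> vert set" where "Vside n = {False} \<times> {..<n}"
definition Wside :: "nat \<Rightarrow> vert set" where "Wside n = {True} \<times> {..<n}"
definition verts :: "nat \<Rightarrow> vert set" where "verts n = Vside n \<union> Wside n"

definition Kadj :: "nat \<Rightarrow> vert \<Rightarrow> vert \<Rightarrow> bool" where
  "Kadj n u v \<longleftrightarrow> u \<in> verts n \<and> v \<in> verts n \<and> fst u \<noteq> fst v"

definition Aut_K :: "nat \<Rightarrow> (vert \<Rightarrow> vert) set" where
  "Aut_K n = {f. bij_betw f (verts n) (verts n)
                 \<and> (\<forall>u\<in>verts n. \<forall>v\<in>verts n. Kadj n (f u) (f v) \<longleftrightarrow> Kadj n u v)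
                 \<and> (\<forall>x. x \<notin> verts n \<longrightarrow> f x = x)}"

definition Aut_group :: "nat \<Rightarrow> (vert \<Rightarrow> vert) monoid" where
  "Aut_group n = \<lparr>carrier = Aut_K n, mult = (\<circ>), one = id\<rparr>"

abbreviation S3 :: "(real^4) set" where "S3 \<equiv> sphere 0 1"

definition SO4 :: "(real^4^4) set" where
  "SO4 = {A. orthogonal_matrix A \<and> det A = 1}"

definition SO4_group :: "(real^4^4) monoid" where
  "SO4_group = \<lparr>carrier = SO4, mult = (**), one = mat 1\<rparr>"

definition edge_img :: "(nat \<Rightarrow> nat \<Rightarrow> real \<Rightarrow> real^4) \<Rightarrow> vert \<Rightarrow> vert \<Rightarrow> (real^4) set" where
  "edge_img e u v = (if fst u = False then path_image (e (snd u) (snd v))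
                     else path_image (e (snd v) (snd u)))"

definition is_embedding :: "nat \<Rightarrow> (vert \<Rightarrow> real^4) \<Rightarrow> (nat \<Rightarrow> nat \<Rightarrow> real \<Rightarrow> real^4) \<Rightarrow> bool" where
  "is_embedding n p e \<longleftrightarrow>
     inj_on p (verts n) \<and> p ` verts n \<subseteq> S3 \<and>
     (\<forall>i<n. \<forall>j<n. arc (e i j) \<and> pathstart (e i j) = p (False, i) \<and>
                  pathfinish (e i j) = p (True, j) \<and> path_image (e i j) \<subseteq> S3 \<and>
                  path_image (e i j) \<inter> p ` verts n = {p (False, i), p (True, j)}) \<and>
     (\<forall>i<n. \<forall>j<n. \<forall>i'<n. \<forall>j'<n. (i, j) \<noteq> (i', j') \<longrightarrow>
        path_image (e i j) \<inter> path_image (e i' j') =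
          p ` ({(False, i), (True, j)} \<inter> {(False, i'), (True, j')}))"

definition graph_img :: "nat \<Rightarrow> (vert \<Rightarrow> real^4) \<Rightarrow> (nat \<Rightarrow> nat \<Rightarrow> real \<Rightarrow> real^4) \<Rightarrow> (real^4) set" where
  "graph_img n p e = p ` verts n \<union> (\<Union>i<n. \<Union>j<n. path_image (e i j))"

definition restricts_to :: "nat \<Rightarrow> (vert \<Rightarrow> real^4) \<Rightarrow> (nat \<Rightarrow> nat \<Rightarrow> real \<Rightarrow> real^4)
                            \<Rightarrow> real^4^4 \<Rightarrow> (vert \<Rightarrow> vert) \<Rightarrow> bool" where
  "restricts_to n p e h f \<longleftrightarrow>
     (\<forall>v\<in>verts n. h *v p v = p (f v)) \<and>
     (\<forall>u\<in>Vside n. \<forall>w\<in>Wside n. (\<lambda>x. h *v x) ` edge_img e u w = edge_img e (f u) (f w))"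

definition induced_by :: "nat \<Rightarrow> (vert \<Rightarrow> real^4) \<Rightarrow> (nat \<Rightarrow> nat \<Rightarrow> real \<Rightarrow> real^4)
                          \<Rightarrow> (vert \<Rightarrow> vert) set \<Rightarrow> (real^4^4) set \<Rightarrow> (real^4^4 \<Rightarrow> vert \<Rightarrow> vert) \<Rightarrow> bool" where
  "induced_by n p e G Gh \<phi> \<longleftrightarrow>
     subgroup Gh SO4_group \<and>
     (\<forall>h\<in>Gh. (\<lambda>x. h *v x) ` graph_img n p e = graph_img n p e) \<and>
     (\<forall>h\<in>Gh. restricts_to n p e h (\<phi> h)) \<and>
     \<phi> \<in> iso (SO4_group\<lparr>carrier := Gh\<rparr>) ((Aut_group n)\<lparr>carrier := G\<rparr>)"

definition axis :: "real^4^4 \<Rightarrow> (real^4) set" where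
  "axis h = {x \<in> S3. h *v x = x}"

end

theory Submission
  imports Defs
begin

(* Let h1, h2 generate the Klein four-group Gh.  The automorphism induced by h2 commutes with the one
   induced by h1, so it permutes the two V-vertices and the two W-vertices fixed by h1; a pair it fixes
   lies on every axis.  Otherwise it swaps both pairs, say v <-> v' and w <-> w'.  The fixed spaces of h2
   and of h1 h2 contain three vertex points each, so they are at least planes, which forces the space
   where h1 = 1 and h2 = -1 to be the line spanned by d = p v - p v'.  Hence every point fixed by h1 and
   orthogonal to d is fixed by h2.  An edge from v to a W-vertex on the negative side of d is fixed
   pointwise by h1 and crosses the hyperplane orthogonal to d; the crossing point is then fixed by h2,
   although h2 maps this edge onto a disjoint one. *)

lemma (in monoid) Klein_four_group:
  assumes "G \<cong> integer_mod_group 2 \<times>\<times> integer_mod_group 2"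
  shows Klein_four_square: "\<And>x. x \<in> carrier G \<Longrightarrow> x \<otimes> x = \<one>"
    and Klein_four_commute: "\<And>x y. x \<in> carrier G \<Longrightarrow> y \<in> carrier G \<Longrightarrow> x \<otimes> y = y \<otimes> x"
    and Klein_four_carrier: "\<exists>a b. carrier G = {\<one>, a, b, a \<otimes> b} \<and> a \<noteq> \<one> \<and> b \<noteq> \<one> \<and> a \<noteq> b"
proof -
  let ?K = "integer_mod_group 2 \<times>\<times> integer_mod_group 2"
  obtain \<psi> where \<psi>: "\<psi> \<in> iso G ?K" using assms by (auto simp: is_iso_def)
  have carrier_K: "carrier ?K = {0, 1} \<times> {0, 1}"
    by (auto simp: DirProd_def integer_mod_group_def)
  have bij: "bij_betw \<psi> (carrier G) ({0, 1} \<times> {0, 1})"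
    using \<psi> carrier_K by (simp add: iso_def)
  have inj: "inj_on \<psi> (carrier G)" and vals: "\<And>x. x \<in> carrier G \<Longrightarrow> \<psi> x \<in> {0, 1} \<times> {0, 1}"
    using bij by (auto simp: bij_betw_def)
  have hom: "\<psi> (x \<otimes> y) = ((fst (\<psi> x) + fst (\<psi> y)) mod 2, (snd (\<psi> x) + snd (\<psi> y)) mod 2)"
    if "x \<in> carrier G" "y \<in> carrier G" for x y
    using \<psi> that by (auto simp: iso_def hom_def DirProd_def integer_mod_group_def split: prod.splits)
  have \<psi>_one: "\<psi> \<one> = (0, 0)"
    using hom[of \<one> \<one>] vals[of \<one>] by auto
  show "x \<otimes> x = \<one>" if "x \<in> carrier G" for x
  proof (rule inj_onD[OF inj])
    show "\<psi> (x \<otimes> x) = \<psi> \<one>" using hom[OF that that] vals[OF that] \<psi>_one by auto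
  qed (use that in auto)
  show "x \<otimes> y = y \<otimes> x" if "x \<in> carrier G" "y \<in> carrier G" for x y
  proof (rule inj_onD[OF inj])
    show "\<psi> (x \<otimes> y) = \<psi> (y \<otimes> x)" using hom[OF that] hom[OF that(2,1)] by (simp add: add.commute)
  qed (use that in auto)
  define a where "a = inv_into (carrier G) \<psi> (1, 0)"
  define b where "b = inv_into (carrier G) \<psi> (0, 1)"
  have ab: "a \<in> carrier G" "\<psi> a = (1, 0)" "b \<in> carrier G" "\<psi> b = (0, 1)"
    using bij unfolding a_def b_def by (auto intro: inv_into_into bij_betw_inv_into_right simp: bij_betw_def)
  have "\<psi> (a \<otimes> b) = (1, 1)" using hom[of a b] ab by simp
  have "carrier G = {\<one>, a, b, a \<otimes> b}"
  proof
    show "carrier G \<subseteq> {\<one>, a, b, a \<otimes> b}"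
    proof
      fix x assume x: "x \<in> carrier G"
      have "\<psi> x \<in> {\<psi> \<one>, \<psi> a, \<psi> b, \<psi> (a \<otimes> b)}"
        using vals[OF x] \<psi>_one ab \<open>\<psi> (a \<otimes> b) = (1, 1)\<close> by auto
      then obtain y where y: "y \<in> {\<one>, a, b, a \<otimes> b}" "\<psi> x = \<psi> y" by blast
      then have "y \<in> carrier G" using ab by auto
      with y show "x \<in> {\<one>, a, b, a \<otimes> b}" using inj_onD[OF inj y(2) x] by simp
    qed
  qed (use ab in auto)
  moreover have "a \<noteq> \<one>" "b \<noteq> \<one>" "a \<noteq> b" using ab \<psi>_one by auto
  ultimately show "\<exists>a b. carrier G = {\<one>, a, b, a \<otimes> b} \<and> a \<noteq> \<one> \<and> b \<noteq> \<one> \<and> a \<noteq> b" by blast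
qed

lemma orthogonal_matrix_inner:
  fixes A :: "real^'n^'n"
  assumes "orthogonal_matrix A"
  shows "(A *v x) \<bullet> (A *v y) = x \<bullet> y"
proof -
  have "orthogonal_transformation ((*v) A)"
    using assms by (simp add: orthogonal_transformation_matrix matrix_vector_mul_linear)
  then show ?thesis by (simp add: orthogonal_transformation_def)
qed

lemma complementary_subspaces_decompose:
  fixes S T :: "'a::euclidean_space set"
  assumes S: "subspace S" and T: "subspace T" and ST: "S \<inter> T = {0}"
    and dim: "DIM('a) \<le> dim S + dim T"
  obtains a b where "a \<in> S" "b \<in> T" "x = a + b"
proof -
  let ?ST = "{a + b |a b. a \<in> S \<and> b \<in> T}"
  have "dim ?ST = dim S + dim T" using dim_sums_Int[OF S T] ST by simp
  with dim have "dim ?ST = DIM('a)" using dim_subset_UNIV[of ?ST] by linarith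
  then have "span ?ST = UNIV" by (simp add: dim_eq_full)
  moreover have "span ?ST = ?ST" by (simp add: span_eq_iff subspace_sums S T)
  ultimately show ?thesis using that by blast
qed

(* In the joint eigenspace decomposition of A and B, the two dimension bounds leave no room for the
   parts where A = -1, so A has no eigenvalue -1. *)
lemma commuting_matrix_eq_id:
  fixes A B :: "real^'n^'n"
  defines "D \<equiv> {x. A *v x = x \<and> B *v x = - x}"
  assumes AB: "\<And>x. A *v (B *v x) = B *v (A *v x)"
    and dim_B: "CARD('n) \<le> dim {x. B *v x = x} + dim D"
    and dim_AB: "CARD('n) \<le> dim {x. A *v (B *v x) = x} + dim D"
  shows "A = mat 1"
proof -
  let ?F = "{x. B *v x = x}" and ?F' = "{x. A *v (B *v x) = x}"
  have subspaces: "subspace ?F" "subspace ?F'" "subspace D"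
    by (auto simp: subspace_def D_def matrix_vector_right_distrib matrix_vector_mult_scaleR)
  have neg_self: "x = - x \<Longrightarrow> x = (0::real^'n)" for x by (simp add: vec_eq_iff)
  have F_D: "?F \<inter> D = {0}"
    using neg_self by (auto simp: D_def)
  have F'_D: "?F' \<inter> D = {0}"
    using neg_self by (auto simp: D_def vec.neg)
  have fixed_F': "A *v x = x" if "x \<in> ?F'" for x
  proof -
    obtain a b where ab: "a \<in> ?F" "b \<in> D" "x = a + b"
      by (rule complementary_subspaces_decompose[OF subspaces(1,3) F_D]) (use dim_B in \<open>simp add: DIM_cart\<close>)
    have Ba: "B *v a = a" using ab(1) by simp
    have Ab: "A *v b = b" and Bb: "B *v b = - b" using ab(2) by (simp_all add: D_def)
    have "A *v a - b = A *v (B *v x)"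
      by (simp add: ab(3) Ba Bb Ab matrix_vector_right_distrib matrix_vector_mult_diff_distrib)
    also have "\<dots> = x" using that by simp
    also have "\<dots> = a + b" by (fact ab(3))
    finally have "A *v a - b = a + b" .
    then have eq: "A *v a - a = 2 *\<^sub>R b" by (simp add: algebra_simps scaleR_2)
    have "A *v a - a \<in> ?F"
      using AB[of a] by (simp add: Ba matrix_vector_mult_diff_distrib)
    moreover have "A *v a - a \<in> D" unfolding eq using subspace_scale[OF subspaces(3) ab(2)] .
    ultimately have "A *v a - a = 0" using F_D by blast
    with eq have "b = 0" by simp
    with \<open>A *v a - a = 0\<close> show ?thesis by (simp add: ab(3) Ab)
  qed
  have "A *v x = mat 1 *v x" for x
  proof -
    obtain a b where ab: "a \<in> ?F'" "b \<in> D" "x = a + b"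
      by (rule complementary_subspaces_decompose[OF subspaces(2,3) F'_D]) (use dim_AB in \<open>simp add: DIM_cart\<close>)
    have "A *v a = a" by (rule fixed_F'[OF ab(1)])
    moreover have "A *v b = b" using ab(2) by (simp add: D_def)
    ultimately show ?thesis by (simp add: ab(3) matrix_vector_right_distrib)
  qed
  then show ?thesis by (simp add: matrix_eq)
qed

lemma dim_le_1_imp_multiple:
  fixes d y :: "'a::euclidean_space"
  assumes "dim S \<le> 1" "d \<in> S" "d \<noteq> 0" "y \<in> S"
  obtains c where "y = c *\<^sub>R d"
proof -
  have "y \<in> span {d}"
  proof (rule ccontr)
    assume y: "y \<notin> span {d}"
    then have "y \<noteq> d" by (auto intro: span_base)
    with y assms(3) have "independent {y, d}" by (simp add: independent_insert)
    then have "card {y, d} \<le> dim S"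
      using assms(2,4) by (intro independent_card_le_dim) auto
    with \<open>y \<noteq> d\<close> assms(1) show False by simp
  qed
  then show ?thesis using that by (auto simp: span_singleton)
qed

lemma three_unit_vectors_dim_ge_2:
  fixes a b c :: "'a::euclidean_space"
  assumes "{a, b, c} \<subseteq> S" "norm a = 1" "norm b = 1" "norm c = 1"
    and "a \<noteq> b" "a \<noteq> c" "b \<noteq> c"
  shows "2 \<le> dim S"
proof (rule ccontr)
  assume "\<not> 2 \<le> dim S"
  then have "dim S \<le> 1" by simp
  have "a \<noteq> 0" using assms(2) by auto
  have antipodal: "x = - a" if "x \<in> S" "norm x = 1" "x \<noteq> a" for x
  proof -
    obtain k where k: "x = k *\<^sub>R a"
      using dim_le_1_imp_multiple[OF \<open>dim S \<le> 1\<close> _ \<open>a \<noteq> 0\<close> \<open>x \<in> S\<close>] assms(1) by blast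
    then have "\<bar>k\<bar> = 1" using that(2) assms(2) by simp
    with k that(3) show ?thesis by (auto simp: abs_if split: if_splits)
  qed
  have "b = - a" "c = - a" by (rule antipodal; use assms in simp)+
  with \<open>b \<noteq> c\<close> show False by simp
qed

lemma continuous_inj_on_strict_mono_on:
  fixes f :: "real \<Rightarrow> real"
  assumes cont: "continuous_on {a..b} f" and inj: "inj_on f {a..b}" and ab: "f a < f b"
  shows "strict_mono_on {a..b} f"
proof (rule strict_mono_onI)
  have between: "f a < f x" if "a < x" "x < b" for x
    using continuous_inj_imp_mono[OF that cont inj] ab by auto
  fix s t assume "s \<in> {a..b}" "t \<in> {a..b}" "s < t"
  then consider "s = a" "t = b" | "s = a" "t < b" | "a < s" by fastforce
  then show "f s < f t"
  proof cases
    case 3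
    have "{a..t} \<subseteq> {a..b}" using \<open>t \<in> {a..b}\<close> by auto
    then have "(f a < f s \<and> f s < f t) \<or> (f t < f s \<and> f s < f a)"
      using continuous_inj_imp_mono[OF 3 \<open>s < t\<close>] continuous_on_subset[OF cont] inj_on_subset[OF inj]
      by blast
    then show ?thesis using between[OF 3] \<open>s < t\<close> \<open>t \<in> {a..b}\<close> by auto
  qed (use ab between \<open>s < t\<close> in auto)
qed

lemma strict_mono_on_involution_eq:
  fixes f :: "'a::linorder \<Rightarrow> 'a"
  assumes mono: "strict_mono_on S f" and maps: "f ` S \<subseteq> S"
    and invol: "\<And>t. t \<in> S \<Longrightarrow> f (f t) = t" and t: "t \<in> S"
  shows "f t = t"
proof (rule ccontr)
  assume "f t \<noteq> t"
  moreover have ft: "f t \<in> S" using maps t by blast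
  ultimately consider "f t < t" | "t < f t" by fastforce
  then show False
  proof cases
    case 1
    then have "f (f t) < f t" using strict_mono_onD[OF mono ft t] by blast
    with 1 invol[OF t] show False by simp
  next
    case 2
    then have "f t < f (f t)" using strict_mono_onD[OF mono t ft] by blast
    with 2 invol[OF t] show False by simp
  qed
qed

lemma arc_involution_fixing_ends_eq:
  fixes \<gamma> :: "real \<Rightarrow> 'a::t2_space"
  assumes arc: "arc \<gamma>" and cont: "continuous_on (path_image \<gamma>) T"
    and inv: "T ` path_image \<gamma> = path_image \<gamma>"
    and start: "T (pathstart \<gamma>) = pathstart \<gamma>" and finish: "T (pathfinish \<gamma>) = pathfinish \<gamma>"
    and invol: "\<And>x. x \<in> path_image \<gamma> \<Longrightarrow> T (T x) = x"
    and x: "x \<in> path_image \<gamma>"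
  shows "T x = x"
proof -
  have cont_\<gamma>: "continuous_on {0..1} \<gamma>" and inj_\<gamma>: "inj_on \<gamma> {0..1}"
    using arc by (auto simp: arc_def path_def)
  have image: "path_image \<gamma> = \<gamma> ` {0..1}" by (simp add: path_image_def)
  define g where "g = inv_into {0..1} \<gamma>"
  have g_\<gamma>: "g (\<gamma> t) = t" if "t \<in> {0..1}" for t
    using inj_\<gamma> that by (simp add: g_def)
  have cont_g: "continuous_on (path_image \<gamma>) g"
    unfolding image using continuous_on_inv[OF cont_\<gamma> compact_Icc] g_\<gamma> by blast
  define \<sigma> where "\<sigma> t = g (T (\<gamma> t))" for t
  have T_\<gamma>: "T (\<gamma> t) \<in> path_image \<gamma>" if "t \<in> {0..1}" for t
    using inv that image by blast
  have \<sigma>_in: "\<sigma> t \<in> {0..1}" and \<gamma>_\<sigma>: "\<gamma> (\<sigma> t) = T (\<gamma> t)" if t: "t \<in> {0..1}" for t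
  proof -
    obtain s where "s \<in> {0..1}" "T (\<gamma> t) = \<gamma> s" using T_\<gamma>[OF t] image by auto
    then show "\<sigma> t \<in> {0..1}" "\<gamma> (\<sigma> t) = T (\<gamma> t)" using g_\<gamma> by (auto simp: \<sigma>_def)
  qed
  have "continuous_on {0..1} (\<lambda>t. T (\<gamma> t))"
    by (rule continuous_on_compose2[OF cont cont_\<gamma>]) (simp add: image)
  then have "continuous_on {0..1} \<sigma>"
    unfolding \<sigma>_def by (rule continuous_on_compose2[OF cont_g]) (use T_\<gamma> in blast)
  moreover have "inj_on \<sigma> {0..1}"
  proof (rule inj_onI)
    fix s t assume s: "s \<in> {0..1}" and t: "t \<in> {0..1}" and "\<sigma> s = \<sigma> t"
    then have "T (\<gamma> s) = T (\<gamma> t)" using \<gamma>_\<sigma> by metis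
    moreover have "\<gamma> s \<in> path_image \<gamma>" "\<gamma> t \<in> path_image \<gamma>" using s t image by blast+
    ultimately have "\<gamma> s = \<gamma> t" using invol by metis
    then show "s = t" using inj_\<gamma> s t by (auto dest: inj_onD)
  qed
  moreover have "\<sigma> 0 = 0" "\<sigma> 1 = 1"
    using start finish g_\<gamma> by (simp_all add: \<sigma>_def pathstart_def pathfinish_def)
  ultimately have "strict_mono_on {0..1} \<sigma>"
    by (intro continuous_inj_on_strict_mono_on) simp_all
  moreover have "\<sigma> (\<sigma> t) = t" if "t \<in> {0..1}" for t
  proof -
    have "\<sigma> (\<sigma> t) = g (T (T (\<gamma> t)))" using \<gamma>_\<sigma>[OF that] by (simp add: \<sigma>_def)
    also have "\<dots> = t" using invol image that g_\<gamma> by auto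
    finally show ?thesis .
  qed
  moreover have "\<sigma> ` {0..1} \<subseteq> {0..1}" using \<sigma>_in by blast
  moreover obtain t where t: "t \<in> {0..1}" "x = \<gamma> t" using x image by auto
  ultimately have "\<sigma> t = t" by (intro strict_mono_on_involution_eq[of "{0..1}" \<sigma>])
  then show ?thesis using \<gamma>_\<sigma>[OF t(1)] t(2) by simp
qed

lemma path_meets_hyperplane:
  fixes \<gamma> :: "real \<Rightarrow> 'a::real_inner"
  assumes "path \<gamma>" "pathstart \<gamma> \<bullet> d > 0" "pathfinish \<gamma> \<bullet> d < 0"
  obtains y where "y \<in> path_image \<gamma>" "y \<bullet> d = 0"
proof -
  have "continuous_on {0..1} (\<lambda>t. \<gamma> t \<bullet> d)"
    using assms(1) by (intro continuous_intros) (simp add: path_def)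
  then obtain t where "0 \<le> t" "t \<le> 1" "\<gamma> t \<bullet> d = 0"
    using IVT2'[of "\<lambda>t. \<gamma> t \<bullet> d" 1 0 0] assms(2,3) by (auto simp: pathstart_def pathfinish_def)
  then show ?thesis by (intro that[of "\<gamma> t"]) (auto simp: path_image_def)
qed

lemma monoid_SO4_subgroup:
  assumes "subgroup H SO4_group"
  shows "monoid (SO4_group\<lparr>carrier := H\<rparr>)"
  using assms by (intro monoidI) (auto simp: SO4_group_def subgroup_def matrix_mul_assoc)

lemma monoid_Aut_subgroup:
  assumes "subgroup H (Aut_group n)"
  shows "monoid ((Aut_group n)\<lparr>carrier := H\<rparr>)"
  using assms by (intro monoidI) (auto simp: Aut_group_def subgroup_def o_assoc)

lemma Vside_iff: "v \<in> Vside n \<longleftrightarrow> v \<in> verts n \<and> \<not> fst v"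
  and Wside_iff: "v \<in> Wside n \<longleftrightarrow> v \<in> verts n \<and> fst v"
  by (auto simp: verts_def Vside_def Wside_def)

lemma Aut_K_fixing_vertex_keeps_other_side:
  assumes g: "g \<in> Aut_K n" and b: "b \<in> verts n" "g b = b"
    and v: "v \<in> verts n" "fst v \<noteq> fst b"
  shows "g v \<in> verts n \<and> fst (g v) = fst v"
proof -
  have "Kadj n (g v) (g b) \<longleftrightarrow> Kadj n v b" using g v(1) b(1) by (simp add: Aut_K_def)
  moreover have "Kadj n v b" using v b by (simp add: Kadj_def)
  ultimately have "Kadj n (g v) b" using b(2) by simp
  then show ?thesis using v(2) by (auto simp: Kadj_def)
qed

locale D2_induced_embedding =
  fixes n :: nat and G :: "(vert \<Rightarrow> vert) set"
    and p :: "vert \<Rightarrow> real^4" and e :: "nat \<Rightarrow> nat \<Rightarrow> real \<Rightarrow> real^4"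
    and Gh :: "(real^4^4) set" and \<phi> :: "real^4^4 \<Rightarrow> vert \<Rightarrow> vert"
  assumes G_sub: "subgroup G (Aut_group n)"
    and G_D2: "(Aut_group n)\<lparr>carrier := G\<rparr> \<cong> integer_mod_group 2 \<times>\<times> integer_mod_group 2"
    and emb: "is_embedding n p e"
    and ind: "induced_by n p e G Gh \<phi>"
    and fix2: "\<And>g. g \<in> G \<Longrightarrow> g \<noteq> id \<Longrightarrow>
                 card {v \<in> Vside n. g v = v} = 2 \<and> card {w \<in> Wside n. g w = w} = 2"
begin

lemma Gh_subgroup: "subgroup Gh SO4_group"
  and phi_iso: "\<phi> \<in> iso (SO4_group\<lparr>carrier := Gh\<rparr>) ((Aut_group n)\<lparr>carrier := G\<rparr>)"
  and restricts: "h \<in> Gh \<Longrightarrow> restricts_to n p e h (\<phi> h)"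
  using ind by (auto simp: induced_by_def)

lemma Gh_Klein_four: "SO4_group\<lparr>carrier := Gh\<rparr> \<cong> integer_mod_group 2 \<times>\<times> integer_mod_group 2"
  using phi_iso G_D2 iso_trans by (auto simp: is_iso_def)

lemma G_square: "g \<in> G \<Longrightarrow> g \<circ> g = id"
  using monoid.Klein_four_square[OF monoid_Aut_subgroup[OF G_sub] G_D2] by (simp add: Aut_group_def)

lemma Gh_square: "h \<in> Gh \<Longrightarrow> h ** h = mat 1"
  using monoid.Klein_four_square[OF monoid_SO4_subgroup[OF Gh_subgroup] Gh_Klein_four]
  by (simp add: SO4_group_def)

lemma Gh_commute: "h \<in> Gh \<Longrightarrow> k \<in> Gh \<Longrightarrow> h ** k = k ** h"
  using monoid.Klein_four_commute[OF monoid_SO4_subgroup[OF Gh_subgroup] Gh_Klein_four]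
  by (simp add: SO4_group_def)

lemma Gh_generators: "\<exists>a b. Gh = {mat 1, a, b, a ** b} \<and> a \<noteq> mat 1 \<and> b \<noteq> mat 1 \<and> a \<noteq> b"
  using monoid.Klein_four_carrier[OF monoid_SO4_subgroup[OF Gh_subgroup] Gh_Klein_four]
  by (simp add: SO4_group_def)

lemma one_in_Gh: "mat 1 \<in> Gh"
  and Gh_mult_closed: "h \<in> Gh \<Longrightarrow> k \<in> Gh \<Longrightarrow> h ** k \<in> Gh"
  and Gh_orthogonal: "h \<in> Gh \<Longrightarrow> orthogonal_matrix h"
  using Gh_subgroup by (auto simp: subgroup_def SO4_group_def SO4_def)

lemma Gh_commute_vec: "h \<in> Gh \<Longrightarrow> k \<in> Gh \<Longrightarrow> h *v (k *v x) = k *v (h *v x)"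
  by (metis matrix_vector_mul_assoc Gh_commute)

lemma Gh_involution: "h \<in> Gh \<Longrightarrow> h *v (h *v x) = x"
  by (simp add: matrix_vector_mul_assoc Gh_square)

lemma phi_mult: "h \<in> Gh \<Longrightarrow> k \<in> Gh \<Longrightarrow> \<phi> (h ** k) = \<phi> h \<circ> \<phi> k"
  using phi_iso by (auto simp: iso_def hom_def SO4_group_def Aut_group_def)

lemma phi_in_G: "h \<in> Gh \<Longrightarrow> \<phi> h \<in> G"
  using phi_iso by (auto simp: iso_def hom_def)

lemma phi_Aut: "h \<in> Gh \<Longrightarrow> \<phi> h \<in> Aut_K n"
  using phi_in_G G_sub by (auto simp: subgroup_def Aut_group_def)

lemma phi_one: "\<phi> (mat 1) = id"
proof -
  have "\<phi> (mat 1) = \<phi> (mat 1 ** mat 1)" by simp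
  also have "\<dots> = \<phi> (mat 1) \<circ> \<phi> (mat 1)" using phi_mult one_in_Gh by blast
  also have "\<dots> = id" using G_square phi_in_G one_in_Gh by blast
  finally show ?thesis .
qed

lemma phi_eq_id_iff: "h \<in> Gh \<Longrightarrow> \<phi> h = id \<longleftrightarrow> h = mat 1"
  using phi_iso phi_one one_in_Gh by (auto simp: iso_def bij_betw_def inj_on_def)

lemma fixed_vertices_card:
  assumes "h \<in> Gh" "h \<noteq> mat 1"
  shows "card {v \<in> Vside n. \<phi> h v = v} = 2" "card {w \<in> Wside n. \<phi> h w = w} = 2"
  using fix2[OF phi_in_G] phi_eq_id_iff assms by auto

lemma vertex_action: "h \<in> Gh \<Longrightarrow> v \<in> verts n \<Longrightarrow> h *v p v = p (\<phi> h v)"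
  using restricts by (simp add: restricts_to_def)

lemma edge_action:
  assumes "h \<in> Gh" "i < n" "j < n" "\<phi> h (False, i) = (False, i')" "\<phi> h (True, j) = (True, j')"
  shows "(\<lambda>x. h *v x) ` path_image (e i j) = path_image (e i' j')"
proof -
  have "(False, i) \<in> Vside n" "(True, j) \<in> Wside n" using assms by (auto simp: Vside_def Wside_def)
  with restricts[OF assms(1)] have "(\<lambda>x. h *v x) ` edge_img e (False, i) (True, j)
      = edge_img e (\<phi> h (False, i)) (\<phi> h (True, j))"
    by (simp add: restricts_to_def)
  with assms(4,5) show ?thesis by (simp add: edge_img_def)
qed

lemma p_inj: "inj_on p (verts n)"
  and norm_p: "v \<in> verts n \<Longrightarrow> norm (p v) = 1"
  and edge_arc: "i < n \<Longrightarrow> j < n \<Longrightarrow> arc (e i j)"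
  and edge_start: "i < n \<Longrightarrow> j < n \<Longrightarrow> pathstart (e i j) = p (False, i)"
  and edge_finish: "i < n \<Longrightarrow> j < n \<Longrightarrow> pathfinish (e i j) = p (True, j)"
  using emb by (auto simp: is_embedding_def)

lemma edges_disjoint:
  assumes "i < n" "j < n" "i' < n" "j' < n" "i \<noteq> i'" "j \<noteq> j'"
  shows "path_image (e i j) \<inter> path_image (e i' j') = {}"
  using emb assms by (auto simp: is_embedding_def)

lemma dim_fixed_space:
  assumes h: "h \<in> Gh" "h \<noteq> mat 1"
  shows "2 \<le> dim {x. h *v x = x}"
proof -
  obtain a a' where aa': "{v \<in> Vside n. \<phi> h v = v} = {a, a'}" "a \<noteq> a'"
    using fixed_vertices_card[OF h] by (auto simp: card_2_iff)
  obtain c where c: "c \<in> Wside n" "\<phi> h c = c"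
    using fixed_vertices_card(2)[OF h] by (auto simp: card_2_iff)
  have verts: "a \<in> verts n" "a' \<in> verts n" "c \<in> verts n" and "a \<noteq> c" "a' \<noteq> c"
    using aa'(1) c by (auto simp: Vside_iff Wside_iff)
  then have "p a \<noteq> p a'" "p a \<noteq> p c" "p a' \<noteq> p c"
    using aa'(2) p_inj by (auto dest: inj_onD)
  moreover have "\<phi> h a = a" "\<phi> h a' = a'" using aa'(1) by blast+
  then have "{p a, p a', p c} \<subseteq> {x. h *v x = x}"
    using c verts vertex_action[OF h(1)] by auto
  ultimately show ?thesis
    using three_unit_vectors_dim_ge_2 norm_p verts by blast
qed

lemma dim_anti_fixed_space:
  assumes h: "h \<in> Gh" "h \<noteq> mat 1" and k: "k \<in> Gh" "k \<noteq> mat 1" and "h \<noteq> k"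
  shows "dim {x. h *v x = x \<and> k *v x = - x} \<le> 1"
proof (rule ccontr)
  assume "\<not> ?thesis"
  then have dim_D: "2 \<le> dim {x. h *v x = x \<and> k *v x = - x}" by simp
  have "h ** k \<noteq> mat 1"
  proof
    assume "h ** k = mat 1"
    then have "h ** (h ** k) = h" by simp
    then show False using \<open>h \<noteq> k\<close> by (simp add: matrix_mul_assoc Gh_square h)
  qed
  then have "2 \<le> dim {x. h *v (k *v x) = x}"
    using dim_fixed_space[of "h ** k"] Gh_mult_closed h k by (simp add: matrix_vector_mul_assoc)
  moreover have "2 \<le> dim {x. k *v x = x}" using dim_fixed_space k by blast
  ultimately have "h = mat 1"
    using dim_D by (intro commuting_matrix_eq_id[of h k] Gh_commute_vec h k) auto
  with h show False by simp
qed

lemma fixed_orthogonal_imp_fixed: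
  assumes h: "h \<in> Gh" "h \<noteq> mat 1" and k: "k \<in> Gh" "k \<noteq> mat 1" and "h \<noteq> k"
    and d: "d \<noteq> 0" "h *v d = d" "k *v d = - d"
    and y: "h *v y = y" "y \<bullet> d = 0"
  shows "k *v y = y"
proof -
  let ?D = "{x. h *v x = x \<and> k *v x = - x}"
  have "y - k *v y \<in> ?D"
    using y Gh_involution[OF k(1)] Gh_commute_vec[OF h(1) k(1)] by (simp add: matrix_vector_mult_diff_distrib)
  then obtain c where c: "y - k *v y = c *\<^sub>R d"
    using dim_le_1_imp_multiple[OF dim_anti_fixed_space[OF assms(1-5)]] d by blast
  have "(k *v y) \<bullet> (k *v d) = y \<bullet> d" by (rule orthogonal_matrix_inner[OF Gh_orthogonal[OF k(1)]])
  then have "(y - k *v y) \<bullet> d = 0" using d(3) y(2) by (simp add: inner_diff_left)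
  then have "c = 0" using c d(1) by simp
  then show ?thesis using c by simp
qed

lemma no_swapped_edge:
  assumes h: "h \<in> Gh" "h \<noteq> mat 1" and k: "k \<in> Gh" "k \<noteq> mat 1" and "h \<noteq> k"
    and ij: "i < n" "i' < n" "i \<noteq> i'" "j < n" "j' < n" "j \<noteq> j'"
    and h_fix: "\<phi> h (False, i) = (False, i)" "\<phi> h (False, i') = (False, i')" "\<phi> h (True, j) = (True, j)"
    and k_swap: "\<phi> k (False, i) = (False, i')" "\<phi> k (False, i') = (False, i)" "\<phi> k (True, j) = (True, j')"
    and below: "p (True, j) \<bullet> (p (False, i) - p (False, i')) < 0"
  shows False
proof -
  define d where "d = p (False, i) - p (False, i')"
  have verts: "(False, i) \<in> verts n" "(False, i') \<in> verts n" "(True, j) \<in> verts n"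
    using ij by (auto simp: verts_def Vside_def Wside_def)
  have "d \<noteq> 0" using p_inj verts ij(3) by (auto simp: d_def dest: inj_onD)
  moreover have "h *v d = d" "k *v d = - d"
    using vertex_action[OF h(1)] vertex_action[OF k(1)] verts h_fix k_swap
    by (simp_all add: d_def matrix_vector_mult_diff_distrib)
  moreover have "p (False, i) \<bullet> d > 0"
  proof -
    have "d \<bullet> d = 2 * (p (False, i) \<bullet> d)"
      using norm_p verts by (simp add: d_def norm_eq_1 inner_diff_left inner_diff_right inner_commute)
    moreover have "0 < d \<bullet> d" using \<open>d \<noteq> 0\<close> by simp
    ultimately show ?thesis by simp
  qed
  ultimately obtain y where y: "y \<in> path_image (e i j)" "y \<bullet> d = 0"
    using path_meets_hyperplane[of "e i j" d] edge_arc edge_start edge_finish ij below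
    by (auto simp: d_def arc_imp_path)
  have "h *v y = y"
  proof (rule arc_involution_fixing_ends_eq[OF edge_arc[OF ij(1,4)] _ _ _ _ _ y(1)])
    show "continuous_on (path_image (e i j)) ((*v) h)"
      by (simp add: linear_continuous_on matrix_vector_mul_linear)
    show "(*v) h ` path_image (e i j) = path_image (e i j)"
      using edge_action[OF h(1) ij(1,4) h_fix(1,3)] .
  qed (use vertex_action[OF h(1)] verts h_fix edge_start edge_finish ij Gh_involution[OF h(1)] in auto)
  then have "k *v y = y"
    using fixed_orthogonal_imp_fixed[OF h k \<open>h \<noteq> k\<close>] \<open>d \<noteq> 0\<close> \<open>h *v d = d\<close> \<open>k *v d = - d\<close> y(2)
    by blast
  then have "y \<in> path_image (e i' j')"
    using edge_action[OF k(1) ij(1,4) k_swap(1,3)] y(1) by (metis image_eqI)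
  then show False using edges_disjoint[OF ij(1,4,2,5,3,6)] y(1) by blast
qed

lemma no_double_swap:
  assumes h: "h \<in> Gh" "h \<noteq> mat 1" and k: "k \<in> Gh" "k \<noteq> mat 1" and "h \<noteq> k"
    and V: "v \<in> Vside n" "v' \<in> Vside n" "v \<noteq> v'" and W: "w \<in> Wside n" "w' \<in> Wside n" "w \<noteq> w'"
    and h_fix: "\<phi> h v = v" "\<phi> h v' = v'" "\<phi> h w = w" "\<phi> h w' = w'"
    and k_swap: "\<phi> k v = v'" "\<phi> k v' = v" "\<phi> k w = w'" "\<phi> k w' = w"
  shows False
proof -
  obtain i i' j j' where idx: "v = (False, i)" "v' = (False, i')" "w = (True, j)" "w' = (True, j')"
    "i < n" "i' < n" "j < n" "j' < n"
    using V W by (auto simp: Vside_def Wside_def)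
  define d where "d = p v - p v'"
  have verts: "v \<in> verts n" "v' \<in> verts n" "w \<in> verts n" "w' \<in> verts n"
    using V W by (auto simp: Vside_iff Wside_iff)
  have "d \<noteq> 0" using p_inj verts V(3) by (auto simp: d_def dest: inj_onD)
  have hd: "h *v d = d" and kd: "k *v d = - d"
    using vertex_action[OF h(1)] vertex_action[OF k(1)] verts h_fix k_swap
    by (simp_all add: d_def matrix_vector_mult_diff_distrib)
  have k_w: "k *v p w = p w'" "k *v p w' = p w"
    using vertex_action[OF k(1)] verts k_swap by simp_all
  have "(k *v p w) \<bullet> (k *v d) = p w \<bullet> d"
    by (rule orthogonal_matrix_inner[OF Gh_orthogonal[OF k(1)]])
  then have opposite: "p w' \<bullet> d = - (p w \<bullet> d)" using k_w kd by simp
  have "p w \<bullet> d \<noteq> 0"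
  proof
    assume "p w \<bullet> d = 0"
    moreover have "h *v p w = p w" using vertex_action[OF h(1)] verts h_fix by simp
    ultimately have "k *v p w = p w"
      using fixed_orthogonal_imp_fixed[OF h k \<open>h \<noteq> k\<close> \<open>d \<noteq> 0\<close> hd kd] by blast
    then show False using k_w p_inj verts W(3) by (auto dest: inj_onD)
  qed
  then consider "p w \<bullet> d < 0" | "p w' \<bullet> d < 0" using opposite by linarith
  then show False
  proof cases
    case 1
    then show False
      using no_swapped_edge[OF h k \<open>h \<noteq> k\<close>, of i i' j j'] idx V(3) W(3) h_fix k_swap
      by (simp add: d_def)
  next
    case 2
    then show False
      using no_swapped_edge[OF h k \<open>h \<noteq> k\<close>, of i i' j' j] idx V(3) W(3) h_fix k_swap
      by (simp add: d_def)
  qed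
qed

lemma commuting_keeps_fixed_vertex:
  assumes h: "h \<in> Gh" and k: "k \<in> Gh" "k \<noteq> mat 1" and x: "x \<in> verts n" "\<phi> h x = x"
  shows "\<phi> k x \<in> verts n \<and> fst (\<phi> k x) = fst x \<and> \<phi> h (\<phi> k x) = \<phi> k x"
proof -
  have "{v \<in> Vside n. \<phi> k v = v} \<noteq> {}" "{w \<in> Wside n. \<phi> k w = w} \<noteq> {}"
    using fixed_vertices_card[OF k] by (metis card.empty zero_neq_numeral)+
  then obtain b where b: "b \<in> verts n" "\<phi> k b = b" "fst b \<noteq> fst x"
    by (cases "fst x") (auto simp: Vside_iff Wside_iff)
  have "\<phi> h (\<phi> k x) = \<phi> k (\<phi> h x)"
    using phi_mult Gh_commute h k by (metis comp_apply)
  then show ?thesis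
    using Aut_K_fixing_vertex_keeps_other_side[OF phi_Aut[OF k(1)] b(1,2) x(1)] b(3) x(2) by auto
qed

lemma common_fixed_pair:
  assumes h: "h \<in> Gh" "h \<noteq> mat 1" and k: "k \<in> Gh" "k \<noteq> mat 1" and "h \<noteq> k"
  obtains u u' where "u \<noteq> u'" "(u \<in> Vside n \<and> u' \<in> Vside n) \<or> (u \<in> Wside n \<and> u' \<in> Wside n)"
    "\<phi> h u = u" "\<phi> h u' = u'" "\<phi> k u = u" "\<phi> k u' = u'"
proof -
  obtain v v' where V: "{x \<in> Vside n. \<phi> h x = x} = {v, v'}" "v \<noteq> v'"
    using fixed_vertices_card(1)[OF h] by (auto simp: card_2_iff)
  obtain w w' where W: "{x \<in> Wside n. \<phi> h x = x} = {w, w'}" "w \<noteq> w'"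
    using fixed_vertices_card(2)[OF h] by (auto simp: card_2_iff)
  have permutes: "\<phi> k ` {x \<in> S. \<phi> h x = x} \<subseteq> {x \<in> S. \<phi> h x = x}"
    if "S = {x \<in> verts n. fst x = b}" for S b
    using commuting_keeps_fixed_vertex[OF h(1) k] that by auto
  have inj: "inj_on (\<phi> k) (verts n)"
    using phi_Aut[OF k(1)] by (auto simp: Aut_K_def bij_betw_def)
  have swap_or_fix: "(\<phi> k a = a \<and> \<phi> k a' = a') \<or> (\<phi> k a = a' \<and> \<phi> k a' = a)"
    if "{x \<in> S. \<phi> h x = x} = {a, a'}" "a \<noteq> a'" "S = {x \<in> verts n. fst x = b}" for S a a' b
  proof -
    have "\<phi> k a \<in> {a, a'}" "\<phi> k a' \<in> {a, a'}" "\<phi> k a \<noteq> \<phi> k a'"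
      using permutes[OF that(3)] that inj by (auto dest: inj_onD)
    then show ?thesis by auto
  qed
  have "(\<phi> k v = v \<and> \<phi> k v' = v') \<or> (\<phi> k v = v' \<and> \<phi> k v' = v)"
    by (rule swap_or_fix[OF V, where b = False]) (auto simp: Vside_iff)
  moreover have "(\<phi> k w = w \<and> \<phi> k w' = w') \<or> (\<phi> k w = w' \<and> \<phi> k w' = w)"
    by (rule swap_or_fix[OF W, where b = True]) (auto simp: Wside_iff)
  moreover have "v \<in> Vside n" "v' \<in> Vside n" "\<phi> h v = v" "\<phi> h v' = v'" using V(1) by blast+
  moreover have "w \<in> Wside n" "w' \<in> Wside n" "\<phi> h w = w" "\<phi> h w' = w'" using W(1) by blast+
  ultimately show ?thesis
    using that no_double_swap[OF h k \<open>h \<noteq> k\<close>, of v v' w w'] V(2) W(2) by blast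
qed

end

theorem lemma3:
  fixes n :: nat and G :: "(vert \<Rightarrow> vert) set"
    and p :: "vert \<Rightarrow> real^4" and e :: "nat \<Rightarrow> nat \<Rightarrow> real \<Rightarrow> real^4"
    and Gh :: "(real^4^4) set" and \<phi> :: "real^4^4 \<Rightarrow> vert \<Rightarrow> vert"
  assumes G_sub: "subgroup G (Aut_group n)"
    and G_D2: "(Aut_group n)\<lparr>carrier := G\<rparr> \<cong> integer_mod_group 2 \<times>\<times> integer_mod_group 2"
    and emb: "is_embedding n p e"
    and ind: "induced_by n p e G Gh \<phi>"
    and fix2: "\<And>g. g \<in> G \<Longrightarrow> g \<noteq> id \<Longrightarrow>
                 card {v \<in> Vside n. g v = v} = 2 \<and> card {w \<in> Wside n. g w = w} = 2"
  shows "\<exists>a b. a \<noteq> b \<and>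
           (\<forall>h\<in>Gh. h \<noteq> mat 1 \<longrightarrow> a \<in> axis h \<and> b \<in> axis h) \<and>
           ((\<exists>v\<in>Vside n. \<exists>v'\<in>Vside n. a = p v \<and> b = p v') \<or>
            (\<exists>w\<in>Wside n. \<exists>w'\<in>Wside n. a = p w \<and> b = p w'))"
proof -
  interpret D2_induced_embedding n G p e Gh \<phi>
    by (rule D2_induced_embedding.intro[OF assms])
  obtain h1 h2 where Gh: "Gh = {mat 1, h1, h2, h1 ** h2}" and h12: "h1 \<noteq> mat 1" "h2 \<noteq> mat 1" "h1 \<noteq> h2"
    using Gh_generators by blast
  have h1: "h1 \<in> Gh" and h2: "h2 \<in> Gh" using Gh by auto
  obtain u u' where uu': "u \<noteq> u'" "(u \<in> Vside n \<and> u' \<in> Vside n) \<or> (u \<in> Wside n \<and> u' \<in> Wside n)"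
    "\<phi> h1 u = u" "\<phi> h1 u' = u'" "\<phi> h2 u = u" "\<phi> h2 u' = u'"
    using common_fixed_pair[OF h1 h12(1) h2 h12(2,3)] by blast
  have verts: "u \<in> verts n" "u' \<in> verts n" using uu'(2) by (auto simp: Vside_iff Wside_iff)
  have "\<phi> h x = x" if "h \<in> Gh" "x \<in> {u, u'}" for h x
    using that uu' phi_one phi_mult[OF h1 h2] unfolding Gh by auto
  then have "p u \<in> axis h \<and> p u' \<in> axis h" if "h \<in> Gh" for h
    using that vertex_action norm_p verts by (auto simp: axis_def)
  moreover have "p u \<noteq> p u'" using p_inj verts uu'(1) by (auto dest: inj_onD)
  ultimately show ?thesis using uu'(2) by blast
qed

end
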